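(* In base $B=3$, for every integer $\eta>2$, $$\gamma_3(\eta)=4\left(\frac{3^{-1/2}}{2}\,3\uparrow\uparrow(\eta-2)\right)^{7/2}-1,$$ i.e. with $E_1=\frac{3^{-1/2}}{2}\,3^{7/2}$ and $E_{m+1}=\frac{3^{-1/2}}{2}\,3^{E_m}$ for $m\ge1$, one has $\gamma_3(\eta)=4E_{\eta-2}-1$.
   Context: Every integer $x>0$ is written uniquely in base $3$ as $x=\sum_{i} x_i 3^i$ with digits $x_i\in\{0,1,2\}$. Define $\mathcal{H}_3(x)=\sum_{i} x_i^2$, $\mathcal{H}_3^0(x)=x$, $\mathcal{H}_3^n=\mathcal{H}_3\circ\mathcal{H}_3^{n-1}$. A positive integer $x$ is happy if $\mathcal{H}_3^n(x)=1$ for some $n\in\mathbb{N}$; its height is $\eta_3(x)=\min\{\alpha\in\mathbb{N}:\mathcal{H}_3^\alpha(x)=1\}$. For $n\in\mathbb{N}$, $\gamma_3(n)$ denotes the smallest happy number $x\ge1$ with $\eta_3(x)=n$. Adapted up-arrow notation: for reals $k,x,y,z$ and integer $n\ge1$, $k(xy\uparrow\uparrow n)^z=k\,E_n$ where $E_1=x\,y^{z}$ and $E_{m+1}=x\,y^{E_m}$ (the factor "$xy$" is repeated $n$ times in the tower $k\,x y^{x y^{\cdot^{\cdot^{x y^{z}}}}}$); here $k=4$, $x=\frac{3^{-1/2}}{2}$, $y=3$, $z=\frac72$. *)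

theory Defs
  imports Complex_Main
begin

fun H3 :: "nat \<Rightarrow> nat" where
  "H3 x = (if x = 0 then 0 else (x mod 3)^2 + H3 (x div 3))"

definition happy3 :: "nat \<Rightarrow> bool" where
  "happy3 x \<longleftrightarrow> x > 0 \<and> (\<exists>n. (H3 ^^ n) x = 1)"

definition eta3 :: "nat \<Rightarrow> nat" where
  "eta3 x = (LEAST a. (H3 ^^ a) x = 1)"

definition gamma3 :: "nat \<Rightarrow> nat" where
  "gamma3 n = (LEAST x. x \<ge> 1 \<and> happy3 x \<and> eta3 x = n)"

fun tower3 :: "nat \<Rightarrow> real" where
  "tower3 0 = 7/2"
| "tower3 (Suc m) = (3 powr (-1/2) / 2) * 3 powr (tower3 m)"

end

theory Submission
  imports Defs
begin

text \<open>
  The base-3 number 2...2 with a digits, i.e. 2 * 3^a - 1, has digit-square sum 4a + 1 and is the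
  smallest number whose digit-square sum is at least 4a + 1. Hence if 4a + 1 is the least number of
  height n, then 2 * 3^a - 1 is the least number of height n + 1. Starting from gamma3 2 = 13
  and writing gamma3 (k + 2) = 4 a_k + 1, this gives a_(k+1) = (3^(a_k) - 1) / 2, which is
  exactly the recursion of the tower shifted by 1/2.
\<close>

declare H3.simps [simp del]

lemma H3_0 [simp]: "H3 0 = 0"
  by (simp add: H3.simps)

lemma H3_mult3_add: "r < 3 \<Longrightarrow> H3 (3 * q + r) = r\<^sup>2 + H3 q"
  by (cases "3 * q + r = 0") (simp_all add: H3.simps[of "3 * q + r"])

lemma H3_eq_0_iff [simp]: "H3 x = 0 \<longleftrightarrow> x = 0"
proof (induction x rule: H3.induct)
  case (1 x)
  show ?case
    using 1 by (cases "x = 0") (auto simp: H3.simps[of x])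
qed

lemma H3_two_3pow_minus1: "H3 (2 * 3 ^ a - 1) = 4 * a + 1"
proof (induction a)
  case 0
  show ?case using H3_mult3_add[of 1 0] by simp
next
  case (Suc a)
  obtain t where "(3::nat) ^ a = Suc t"
    using not0_implies_Suc by fastforce
  then have "2 * 3 ^ Suc a - 1 = 3 * (2 * 3 ^ a - 1) + (2::nat)"
    by simp
  then show ?case
    using Suc H3_mult3_add[of 2 "2 * 3 ^ a - 1"] by simp
qed

lemma two_3pow_minus1_le_if_H3_ge: "4 * a + 1 \<le> H3 x \<Longrightarrow> 2 * 3 ^ a - 1 \<le> x"
proof (induction a arbitrary: x)
  case 0
  then show ?case by (cases "x = 0") auto
next
  case (Suc a)
  define q r where "q = x div 3" and "r = x mod 3"
  have x: "x = 3 * q + r" and r: "r < 3"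
    unfolding q_def r_def by auto
  have H3x: "H3 x = r\<^sup>2 + H3 q"
    using x r H3_mult3_add by simp
  have r_cases: "r = 0 \<or> r = 1 \<or> r = 2"
    using r by auto
  then have "r\<^sup>2 \<le> 4" by auto
  then have "2 * 3 ^ a - 1 \<le> q"
    using Suc H3x by simp
  then consider "q = 2 * 3 ^ a - 1" | "2 * 3 ^ a \<le> q"
    by linarith
  then show ?case
  proof cases
    case 1
    \<comment> \<open>the top digits are already minimal, so the last digit must carry the remaining 4\<close>
    then have "4 \<le> r\<^sup>2"
      using Suc.prems H3x H3_two_3pow_minus1 by simp
    then have "r = 2"
      using r_cases by auto
    with 1 x show ?thesis
      using one_le_power[of "3::nat" a] by simp
  qed (use x in simp)
qed

definition has_height :: "nat \<Rightarrow> nat \<Rightarrow> bool" where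
  "has_height x n \<longleftrightarrow> x \<ge> 1 \<and> happy3 x \<and> eta3 x = n"

definition least_of_height :: "nat \<Rightarrow> nat \<Rightarrow> bool" where
  "least_of_height x n \<longleftrightarrow> has_height x n \<and> (\<forall>y < x. \<not> has_height y n)"

lemma gamma3_eq_Least: "gamma3 n = (LEAST x. has_height x n)"
  by (simp add: gamma3_def has_height_def)

lemma gamma3_eqI: "least_of_height x n \<Longrightarrow> gamma3 n = x"
  unfolding gamma3_eq_Least least_of_height_def
  by (rule Least_equality) (auto intro: leI)

lemma has_height_0_iff: "has_height x 0 \<longleftrightarrow> x = 1"
proof
  assume h: "has_height x 0"
  then obtain n where "(H3 ^^ n) x = 1"
    by (auto simp: has_height_def happy3_def)
  then have "(H3 ^^ (LEAST a. (H3 ^^ a) x = 1)) x = 1"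
    by (rule LeastI)
  with h show "x = 1"
    by (simp add: has_height_def eta3_def)
qed (auto simp: has_height_def happy3_def eta3_def intro!: exI[of _ 0])

lemma has_height_1_iff: "has_height 1 n \<longleftrightarrow> n = 0"
  using has_height_0_iff by (auto simp: has_height_def)

lemma has_height_Suc_gt_1: "has_height x (Suc n) \<Longrightarrow> x > 1"
  using has_height_1_iff[of "Suc n"] by (cases "x = 1") (auto simp: has_height_def)

lemma has_height_Suc_iff:
  assumes "x > 1"
  shows "has_height x (Suc n) \<longleftrightarrow> has_height (H3 x) n"
proof -
  have iter: "(H3 ^^ Suc m) x = (H3 ^^ m) (H3 x)" for m
    by (simp add: funpow_Suc_right del: funpow.simps)
  have happy: "(\<exists>m. (H3 ^^ m) x = 1) \<longleftrightarrow> (\<exists>m. (H3 ^^ m) (H3 x) = 1)"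
  proof
    assume "\<exists>m. (H3 ^^ m) x = 1"
    then obtain m where m: "(H3 ^^ m) x = 1" by blast
    with assms obtain k where "m = Suc k"
      by (cases m) auto
    with m iter show "\<exists>m. (H3 ^^ m) (H3 x) = 1" by auto
  qed (use iter in metis)
  show ?thesis
  proof (cases "\<exists>m. (H3 ^^ m) (H3 x) = 1")
    case True
    then obtain m where "(H3 ^^ Suc m) x = 1"
      using iter by auto
    then have "eta3 x = Suc (LEAST m. (H3 ^^ Suc m) x = 1)"
      unfolding eta3_def by (rule Least_Suc) (use assms in simp)
    also have "\<dots> = Suc (eta3 (H3 x))"
      by (simp add: eta3_def iter del: funpow.simps)
    finally have "eta3 x = Suc (eta3 (H3 x))" .
    moreover have "H3 x \<ge> 1"
      using assms by (cases "H3 x") auto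
    ultimately show ?thesis
      using happy True assms by (auto simp: has_height_def happy3_def)
  qed (use happy in \<open>auto simp: has_height_def happy3_def\<close>)
qed

lemma least_of_height_2: "least_of_height 13 2"
proof -
  have "H3 13 = 3" "H3 3 = 1"
    using H3_mult3_add[of 1 4] H3_mult3_add[of 1 1] H3_mult3_add[of 1 0] H3_mult3_add[of 0 1]
    by simp_all
  then have "has_height 13 2"
    using has_height_Suc_iff[of 13 1] has_height_Suc_iff[of 3 0] has_height_0_iff
    by (simp add: numeral_2_eq_2)
  moreover have "\<not> has_height y 2" if "y < 13" for y
  proof
    assume "has_height y 2"
    then have h: "has_height y (Suc 1)"
      by (simp add: numeral_2_eq_2)
    then have "y > 1"
      by (rule has_height_Suc_gt_1)
    with h have h1: "has_height (H3 y) (Suc 0)"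
      using has_height_Suc_iff by simp
    then have "H3 y > 1"
      by (rule has_height_Suc_gt_1)
    with h1 have "H3 (H3 y) = 1"
      using has_height_Suc_iff has_height_0_iff by blast
    moreover have "H3 y = 1 \<or> H3 (H3 y) \<noteq> 1"
    proof -
      have "y=2 \<or> y=3 \<or> y=4 \<or> y=5 \<or> y=6 \<or> y=7 \<or> y=8 \<or> y=9 \<or> y=10 \<or> y=11 \<or> y=12"
        using \<open>y > 1\<close> \<open>y < 13\<close> by arith
      then show ?thesis
        by (elim disjE; simp add: H3.simps)
    qed
    ultimately show False
      using \<open>H3 y > 1\<close> by simp
  qed
  ultimately show ?thesis
    by (simp add: least_of_height_def)
qed

lemma least_of_height_Suc:
  assumes least: "least_of_height (4 * a + 1) n" and "a \<ge> 1"
  shows "least_of_height (2 * 3 ^ a - 1) (Suc n)"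
proof -
  let ?x = "2 * 3 ^ a - 1 :: nat"
  have "(3::nat) ^ 1 \<le> 3 ^ a"
    using \<open>a \<ge> 1\<close> by (rule power_increasing) simp
  then have "?x > 1" by simp
  moreover have "has_height (H3 ?x) n"
    unfolding H3_two_3pow_minus1 using least by (simp add: least_of_height_def)
  ultimately have "has_height ?x (Suc n)"
    using has_height_Suc_iff by blast
  moreover have "\<not> has_height y (Suc n)" if "y < ?x" for y
  proof
    assume h: "has_height y (Suc n)"
    then have "y > 1"
      by (rule has_height_Suc_gt_1)
    with h have "has_height (H3 y) n"
      using has_height_Suc_iff by blast
    with least have "4 * a + 1 \<le> H3 y"
      unfolding least_of_height_def using leI by blast
    then have "?x \<le> y"
      by (rule two_3pow_minus1_le_if_H3_ge)
    with that show False by simp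
  qed
  ultimately show ?thesis
    by (simp add: least_of_height_def)
qed

lemma pow3_eq_double_half_plus1: "(3::nat) ^ a = 2 * ((3 ^ a - 1) div 2) + 1"
proof -
  have "odd ((3::nat) ^ a)" by simp
  then show ?thesis by presburger
qed

fun tower_nat :: "nat \<Rightarrow> nat" where
  "tower_nat 0 = 3"
| "tower_nat (Suc k) = (3 ^ tower_nat k - 1) div 2"

lemma tower_nat_ge_1: "tower_nat k \<ge> 1"
proof (induction k)
  case (Suc k)
  have "(3::nat) ^ 1 \<le> 3 ^ tower_nat k"
    using Suc by (intro power_increasing) auto
  then show ?case by simp
qed simp

lemma pow3_tower_nat: "3 ^ tower_nat k = 2 * tower_nat (Suc k) + 1"
  unfolding tower_nat.simps by (rule pow3_eq_double_half_plus1)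

lemma tower3_eq_tower_nat: "tower3 k = real (tower_nat k) + 1/2"
proof (induction k)
  case (Suc k)
  have "tower3 (Suc k) = 3 powr (-1/2) * 3 powr (real (tower_nat k) + 1/2) / 2"
    using Suc by simp
  also have "\<dots> = real (3 ^ tower_nat k) / 2"
    by (simp add: powr_add[symmetric] powr_realpow)
  also have "\<dots> = real (tower_nat (Suc k)) + 1/2"
    unfolding pow3_tower_nat by (simp del: tower_nat.simps)
  finally show ?case .
qed simp

lemma least_of_height_tower_nat: "least_of_height (4 * tower_nat k + 1) (k + 2)"
proof (induction k)
  case 0
  show ?case using least_of_height_2 by (simp add: numeral_2_eq_2)
next
  case (Suc k)
  have "2 * 3 ^ tower_nat k - 1 = 4 * tower_nat (Suc k) + 1"
    unfolding pow3_tower_nat by (simp del: tower_nat.simps)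
  with least_of_height_Suc[OF Suc tower_nat_ge_1] show ?case
    by simp
qed

theorem theorem5p2:
  fixes \<eta> :: nat
  assumes "\<eta> > 2"
  shows "real (gamma3 \<eta>) = 4 * tower3 (\<eta> - 2) - 1"
proof -
  define k where "k = \<eta> - 2"
  with assms have \<eta>: "\<eta> = k + 2"
    by simp
  have "gamma3 \<eta> = 4 * tower_nat k + 1"
    unfolding \<eta> by (rule gamma3_eqI[OF least_of_height_tower_nat])
  then show ?thesis
    by (simp add: \<eta> tower3_eq_tower_nat)
qed

end
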